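(* Let $f:\{0,1\}^n\to\{\pm1\}$ be $k$-monotone. Let $t$ be an integer with $1<t\le n$, and let $d\ge 1$ be an integer and $\epsilon>0$ such that $d\epsilon\ge 2kn/t$. Then $f$ is $(t,d,\epsilon)$-concentrated, i.e., there exists an integer $r$ with $n/2-t/2\le r\le n/2+t/2$ such that $\mathbf{W}^{>d}(f|_r)<\epsilon$.
   Context: A function $g:\{0,1\}^n\to\{0,1\}$ is monotone if $x\preceq y$ coordinatewise implies $g(x)\le g(y)$; $g$ is $k$-monotone if it is the XOR of $k$ monotone functions. A function $f:\{0,1\}^n\to\{\pm1\}$ is $k$-monotone if $(1-f)/2$ is $k$-monotone (i.e. the value $0$ is identified with $1$ and the value $1$ with $-1$). Slices: for $0\le r\le n$, $\binom{[n]}{r}=\{x\in\{0,1\}^n:\sum_i x_i=r\}$ with the uniform distribution; $f|_r$ denotes the restriction of $f$ to this slice; $\langle g,h\rangle=\mathbb{E}_{x}[g(x)h(x)]$ ($x$ uniform on the slice), $\|g\|_2^2=\langle g,g\rangle$. Young–Fourier basis: for $d\le n/2$, a sequence of length $d$ is a sequence $s_1,\dots,s_d$ of distinct elements of $[n]$. For disjoint sequences $A=(a_i),B=(b_i)$ of length $d$, $\chi_{A,B}(x)=\prod_{i=1}^d(x_{a_i}-x_{b_i})$, and $A<B$ means $a_i<b_i$ for all $i$. A top set of length $d$ is an increasing sequence $B$ for which some disjoint sequence $A$ of length $d$ satisfies $A<B$; $\mathcal{B}_{n,d}$ is the set of top sets of length $d$. Set $\chi_B=\sum_{A:\,A<B}\chi_{A,B}$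 (sum over sequences $A$ of length $d$ disjoint from $B$ with $A<B$). For $r\le n/2$, $\{\chi_B: B\in\mathcal{B}_{n,d},d\le r\}$ is an orthogonal basis of real functions on $\binom{[n]}{r}$; for $r>n/2$ one uses $\chi_{\bar B}(x):=\chi_B(\bar x)$ ($\bar x$ = bitwise complement), $B\in\mathcal B_{n,d}$, $d\le n-r$. For $g$ on the slice, $\hat g(B)=\langle g,\chi_B\rangle/\|\chi_B\|_2^2$ (resp. with $\chi_{\bar B}$ when $r>n/2$), so $g=\sum_B\hat g(B)\chi_B$ (resp. $\chi_{\bar B}$). Level weights: $\mathbf W^{d}(g)=\sum_{B\in\mathcal B_{n,d}}\hat g(B)^2\|\chi_B\|_2^2$, $\mathbf W^{>d}(g)=\sum_{d'>d}\mathbf W^{d'}(g)$, $\mathbf W^{\le d}(g)=\sum_{d'\le d}\mathbf W^{d'}(g)$. $f:\{0,1\}^n\to\{\pm1\}$ is $(t,d,\epsilon)$-concentrated if for some integer $r$ with $n/2-t/2\le r\le n/2+t/2$, $\mathbf W^{>d}(f|_r)<\epsilon$. *)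

theory Defs
  imports Complex_Main
begin

text \<open>Points of the cube {0,1}^n are represented by their supports: subsets of [n] = {1..n};
  coordinate x_i is 1 iff i is in x.\<close>

definition cube :: "nat \<Rightarrow> nat set set" where
  "cube n = Pow {1..n}"

definition monotone_bool :: "nat \<Rightarrow> (nat set \<Rightarrow> nat) \<Rightarrow> bool" where
  "monotone_bool n g \<longleftrightarrow> (\<forall>x\<in>cube n. g x \<in> {0,1}) \<and>
     (\<forall>x\<in>cube n. \<forall>y\<in>cube n. x \<subseteq> y \<longrightarrow> g x \<le> g y)"

definition k_monotone_bool :: "nat \<Rightarrow> nat \<Rightarrow> (nat set \<Rightarrow> nat) \<Rightarrow> bool" where
  "k_monotone_bool n k g \<longleftrightarrow> (\<exists>G :: nat \<Rightarrow> nat set \<Rightarrow> nat.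
     (\<forall>i<k. monotone_bool n (G i)) \<and>
     (\<forall>x\<in>cube n. g x = (\<Sum>i<k. G i x) mod 2))"

definition k_monotone_pm :: "nat \<Rightarrow> nat \<Rightarrow> (nat set \<Rightarrow> real) \<Rightarrow> bool" where
  "k_monotone_pm n k f \<longleftrightarrow> (\<forall>x\<in>cube n. f x \<in> {-1,1}) \<and>
     (\<exists>g. k_monotone_bool n k g \<and> (\<forall>x\<in>cube n. real (g x) = (1 - f x) / 2))"

definition slice :: "nat \<Rightarrow> nat \<Rightarrow> nat set set" where
  "slice n r = {x. x \<subseteq> {1..n} \<and> card x = r}"

definition slice_ip :: "nat \<Rightarrow> nat \<Rightarrow> (nat set \<Rightarrow> real) \<Rightarrow> (nat set \<Rightarrow> real) \<Rightarrow> real" where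
  "slice_ip n r g h = (\<Sum>x\<in>slice n r. g x * h x) / real (card (slice n r))"

definition seqs :: "nat \<Rightarrow> nat \<Rightarrow> nat list set" where
  "seqs n d = {s. length s = d \<and> distinct s \<and> set s \<subseteq> {1..n}}"

definition chiAB :: "nat list \<Rightarrow> nat list \<Rightarrow> nat set \<Rightarrow> real" where
  "chiAB A B x = (\<Prod>i<length B. (of_bool (A ! i \<in> x) - of_bool (B ! i \<in> x)))"

definition seq_less :: "nat list \<Rightarrow> nat list \<Rightarrow> bool" where
  "seq_less A B \<longleftrightarrow> length A = length B \<and> (\<forall>i<length A. A ! i < B ! i)"

definition below_seqs :: "nat \<Rightarrow> nat list \<Rightarrow> nat list set" where
  "below_seqs n B = {A \<in> seqs n (length B). set A \<inter> set B = {} \<and> seq_less A B}"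

definition top_sets :: "nat \<Rightarrow> nat \<Rightarrow> nat list set" where
  "top_sets n d = {B \<in> seqs n d. sorted_wrt (<) B \<and> below_seqs n B \<noteq> {}}"

definition chi :: "nat \<Rightarrow> nat list \<Rightarrow> nat set \<Rightarrow> real" where
  "chi n B x = (\<Sum>A\<in>below_seqs n B. chiAB A B x)"

definition slice_basis :: "nat \<Rightarrow> nat \<Rightarrow> nat list \<Rightarrow> nat set \<Rightarrow> real" where
  "slice_basis n r B x = (if 2 * r \<le> n then chi n B x else chi n B ({1..n} - x))"

definition fourier_coeff :: "nat \<Rightarrow> nat \<Rightarrow> (nat set \<Rightarrow> real) \<Rightarrow> nat list \<Rightarrow> real" where
  "fourier_coeff n r g B =
     slice_ip n r g (slice_basis n r B) / slice_ip n r (slice_basis n r B) (slice_basis n r B)"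

definition level_weight :: "nat \<Rightarrow> nat \<Rightarrow> (nat set \<Rightarrow> real) \<Rightarrow> nat \<Rightarrow> real" where
  "level_weight n r g d = (\<Sum>B\<in>top_sets n d.
      (fourier_coeff n r g B)\<^sup>2 * slice_ip n r (slice_basis n r B) (slice_basis n r B))"

definition weight_gt :: "nat \<Rightarrow> nat \<Rightarrow> (nat set \<Rightarrow> real) \<Rightarrow> nat \<Rightarrow> real" where
  "weight_gt n r g d = (\<Sum>d'\<in>{d<..min r (n - r)}. level_weight n r g d')"

definition concentrated :: "nat \<Rightarrow> (nat set \<Rightarrow> real) \<Rightarrow> nat \<Rightarrow> nat \<Rightarrow> real \<Rightarrow> bool" where
  "concentrated n f t d \<epsilon> \<longleftrightarrow> (\<exists>r::int. real n / 2 - real t / 2 \<le> r \<and> r \<le> real n / 2 + real t / 2 \<and>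
      0 \<le> r \<and> r \<le> n \<and> weight_gt n (nat r) f d < \<epsilon>)"

end

theory Submission
  imports Defs "HOL-Combinatorics.Transposition"
begin

text \<open>
  Let \<open>L g x = \<Sum>\<^sub>u\<^sub>,\<^sub>v (g x - g (\<tau>\<^sub>u\<^sub>v x))\<close>, twice the Laplacian of the transposition graph
  on a slice. Each \<open>\<chi>\<^sub>A\<^sub>,\<^sub>B\<close> is an eigenfunction of \<open>L\<close>, so a Young--Fourier basis function of
  level \<open>e\<close> has eigenvalue \<open>2e(n + 1 - e)\<close>. The same holds for the Laplacian restricted to
  transpositions inside \<open>{1..m}\<close>, with \<open>e\<close> replaced by the number of entries of \<open>B\<close> that are at
  most \<open>m\<close>; these partial Laplacians separate distinct top sets, which gives orthogonality.
  A Bessel inequality for \<open>L\<close> then bounds \<open>W\<^sup>>\<^sup>d(f|\<^sub>r)\<close> by \<open>\<langle>L f, f\<rangle>\<close> divided by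
  \<open>2(d + 1)(n + 1 - min r (n - r))\<close>.

  For \<open>f = \<plusminus>1\<close>, every transposition changing \<open>f\<close> passes through an edge between slices \<open>r\<close>
  and \<open>r + 1\<close> on which \<open>f\<close> flips, so \<open>W\<^sup>>\<^sup>d(f|\<^sub>r) \<le> 2n p\<^sub>r / (d + 1)\<close>, where \<open>p\<^sub>r\<close> is
  the fraction of such edges. For a monotone function the \<open>p\<^sub>r\<close> are differences of consecutive
  slice means, so \<open>\<Sum>\<^sub>r p\<^sub>r \<le> 1\<close>; a flip of an XOR of \<open>k\<close> monotone functions is a flip of one of
  them, so \<open>\<Sum>\<^sub>r p\<^sub>r \<le> k\<close>. Hence one of the \<open>t\<close> middle slices has \<open>p\<^sub>r \<le> k/t\<close>, and there
  \<open>W\<^sup>>\<^sup>d(f|\<^sub>r) \<le> 2nk / (t(d + 1)) \<le> d\<epsilon> / (d + 1) < \<epsilon>\<close>.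
\<close>

section \<open>The transposition Laplacian\<close>

abbreviation coord :: "nat \<Rightarrow> nat set \<Rightarrow> real" where
  "coord a x \<equiv> of_bool (a \<in> x)"

definition swap_laplacian :: "nat set \<Rightarrow> (nat set \<Rightarrow> real) \<Rightarrow> nat set \<Rightarrow> real" where
  "swap_laplacian M g x = (\<Sum>u\<in>M. \<Sum>v\<in>M. g x - g (transpose u v ` x))"

lemma swap_laplacian_cong: "(\<And>y. g y = h y) \<Longrightarrow> swap_laplacian M g x = swap_laplacian M h x"
  by (metis ext)

lemma swap_laplacian_sum:
  "finite I \<Longrightarrow> swap_laplacian M (\<lambda>y. \<Sum>i\<in>I. g i y) x = (\<Sum>i\<in>I. swap_laplacian M (g i) x)"
  unfolding swap_laplacian_def by (simp add: sum_subtractf[symmetric] sum.swap[of _ I])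

lemma swap_laplacian_diff:
  "swap_laplacian M (\<lambda>y. g y - h y) x = swap_laplacian M g x - swap_laplacian M h x"
  unfolding swap_laplacian_def by (simp add: sum_subtractf[symmetric] algebra_simps)

lemma swap_laplacian_scale: "swap_laplacian M (\<lambda>y. c * g y) x = c * swap_laplacian M g x"
  unfolding swap_laplacian_def by (simp add: sum_distrib_left algebra_simps)

lemma swap_laplacian_mult_invariant:
  assumes "\<And>u v. u \<in> M \<Longrightarrow> v \<in> M \<Longrightarrow> \<Phi> (transpose u v ` x) = \<Phi> x"
  shows "swap_laplacian M (\<lambda>y. g y * \<Phi> y) x = \<Phi> x * swap_laplacian M g x"
  unfolding swap_laplacian_def sum_distrib_left
  by (intro sum.cong refl) (simp add: assms algebra_simps)

lemma swap_laplacian_mult: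
  "swap_laplacian M (\<lambda>y. g y * h y) x = g x * swap_laplacian M h x
     + (\<Sum>u\<in>M. \<Sum>v\<in>M. (g x - g (transpose u v ` x)) * h (transpose u v ` x))"
  unfolding swap_laplacian_def sum_distrib_left sum.distrib[symmetric]
  by (intro sum.cong refl) (simp add: algebra_simps)

lemma chiAB_Nil [simp]: "chiAB A [] x = 1"
  by (simp add: chiAB_def)

lemma chiAB_Cons [simp]: "chiAB (a # A) (b # B) x = (coord a x - coord b x) * chiAB A B x"
  unfolding chiAB_def length_Cons prod.lessThan_Suc_shift by simp

lemma chiAB_transpose_other:
  assumes "u \<notin> set A \<union> set B" "v \<notin> set A \<union> set B" "length A = length B"
  shows "chiAB A B (transpose u v ` x) = chiAB A B x"
  using assms(3,1,2) by (induction A B rule: list_induct2) (auto simp: in_transpose_image_iff)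

text \<open>In the sum below the terms v = a and v = b of every pair (a, b) cancel.\<close>

lemma sum_transpose_chiAB_eq_0:
  assumes "length A = length B" "distinct A" "distinct B" "set A \<inter> set B = {}"
    "t \<notin> set A \<union> set B"
  shows "(\<Sum>v\<in>set A \<union> set B. (coord t x - coord v x) * chiAB A B (transpose t v ` x)) = 0"
  using assms
proof (induction A B rule: list_induct2)
  case Nil
  then show ?case by simp
next
  case (Cons a A b B)
  have ab: "a \<noteq> b" "a \<notin> set A \<union> set B" "b \<notin> set A \<union> set B" "t \<noteq> a" "t \<noteq> b"
    using Cons.prems by auto
  have rest: "(\<Sum>v\<in>set A \<union> set B. (coord t x - coord v x) * chiAB (a # A) (b # B) (transpose t v ` x))
      = (coord a x - coord b x) * (\<Sum>v\<in>set A \<union> set B. (coord t x - coord v x) * chiAB A B (transpose t v ` x))"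
    unfolding sum_distrib_left
  proof (intro sum.cong refl)
    fix v assume "v \<in> set A \<union> set B"
    then have "transpose t v a = a" "transpose t v b = b" using ab by (auto simp: transpose_def)
    then show "(coord t x - coord v x) * chiAB (a # A) (b # B) (transpose t v ` x)
      = (coord a x - coord b x) * ((coord t x - coord v x) * chiAB A B (transpose t v ` x))"
      by (simp add: in_transpose_image_iff)
  qed
  have "chiAB A B (transpose t a ` x) = chiAB A B x" "chiAB A B (transpose t b ` x) = chiAB A B x"
    using Cons ab by (auto intro: chiAB_transpose_other)
  then show ?case
    using Cons ab rest by (simp add: sum.insert_if in_transpose_image_iff algebra_simps)
qed

lemma sum_sum_symmetric_two_points:
  fixes F :: "'a \<Rightarrow> 'a \<Rightarrow> 'b::comm_ring_1"
  assumes "finite M0" "a \<notin> M0" "b \<notin> M0" "a \<noteq> b"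
    "\<And>u v. F u v = F v u" "\<And>u v. u \<in> M0 \<Longrightarrow> v \<in> M0 \<Longrightarrow> F u v = 0"
  shows "(\<Sum>u\<in>insert a (insert b M0). \<Sum>v\<in>insert a (insert b M0). F u v)
           = F a a + F b b + 2 * F a b + 2 * (\<Sum>v\<in>M0. F a v + F b v)"
proof -
  have inner: "(\<Sum>v\<in>insert a (insert b M0). F u v) = F a u + F b u" if "u \<in> M0" for u
    using assms that by (simp add: assms(5)[of u a] assms(5)[of u b])
  have "(\<Sum>u\<in>insert a (insert b M0). \<Sum>v\<in>insert a (insert b M0). F u v)
      = (\<Sum>v\<in>insert a (insert b M0). F a v) + (\<Sum>v\<in>insert a (insert b M0). F b v)
        + (\<Sum>u\<in>M0. F a u + F b u)"
    using assms(1-4) inner by simp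
  then show ?thesis
    using assms(1-4) by (simp add: sum.distrib assms(5)[of b a] algebra_simps)
qed

lemma sum_transpose_pair_chiAB:
  assumes "finite M0" "set A \<union> set B \<subseteq> M0" "a \<notin> M0" "b \<notin> M0"
    "length A = length B" "distinct A" "distinct B" "set A \<inter> set B = {}"
  shows "(\<Sum>v\<in>M0. (coord a x - coord v x) * chiAB A B (transpose a v ` x)
            - (coord b x - coord v x) * chiAB A B (transpose b v ` x))
         = (real (card M0) - 2 * real (length B)) * (coord a x - coord b x) * chiAB A B x"
proof -
  define S where "S = set A \<union> set B"
  define F where "F v = (coord a x - coord v x) * chiAB A B (transpose a v ` x)
      - (coord b x - coord v x) * chiAB A B (transpose b v ` x)" for v
  have S: "finite S" "S \<subseteq> M0" "a \<notin> S" "b \<notin> S" using assms(2-4) by (auto simp: S_def)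
  have "(\<Sum>v\<in>S. F v) = 0"
    using sum_transpose_chiAB_eq_0[OF assms(5-8), of a x] sum_transpose_chiAB_eq_0[OF assms(5-8), of b x] S
    by (simp add: F_def S_def sum_subtractf)
  moreover have "F v = (coord a x - coord b x) * chiAB A B x" if "v \<in> M0 - S" for v
    using that S chiAB_transpose_other[OF _ _ assms(5)] by (simp add: F_def S_def algebra_simps)
  moreover have "card (M0 - S) = card M0 - 2 * length B" "2 * length B \<le> card M0"
    using assms(1,5-8) S(2) card_mono[OF assms(1) S(2)]
    by (simp_all add: card_Diff_subset S_def card_Un_disjoint distinct_card)
  ultimately show ?thesis
    using sum.subset_diff[OF S(2) assms(1), of F] by (simp add: F_def of_nat_diff)
qed

lemma swap_cross_term_chiAB:
  assumes "finite M" "insert a (insert b (set A \<union> set B)) \<subseteq> M" "a \<noteq> b"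
    "a \<notin> set A \<union> set B" "b \<notin> set A \<union> set B"
    "length A = length B" "distinct A" "distinct B" "set A \<inter> set B = {}"
  shows "(\<Sum>u\<in>M. \<Sum>v\<in>M. (coord a x - coord b x - (coord a (transpose u v ` x) - coord b (transpose u v ` x)))
            * chiAB A B (transpose u v ` x))
         = 2 * (real (card M) - 2 * real (length B)) * (coord a x - coord b x) * chiAB A B x"
proof -
  define g where "g y = coord a y - coord b y" for y
  define h where "h = chiAB A B"
  define F where "F u v = (g x - g (transpose u v ` x)) * h (transpose u v ` x)" for u v
  define M0 where "M0 = M - {a, b}"
  have M0: "finite M0" "M = insert a (insert b M0)" "a \<notin> M0" "b \<notin> M0" "set A \<union> set B \<subseteq> M0"
    using assms(1,2,4,5) by (auto simp: M0_def)
  have "F u v = 0" if "u \<in> M0" "v \<in> M0" for u v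
  proof -
    have "transpose u v a = a" "transpose u v b = b" using that by (auto simp: M0_def)
    then show ?thesis by (simp add: F_def g_def in_transpose_image_iff)
  qed
  moreover have "F a a = 0" "F b b = 0" "F a b = 2 * g x * h x"
    using chiAB_transpose_other[of a A B b x] assms(3-6)
    by (auto simp: F_def g_def h_def in_transpose_image_iff)
  moreover have "F a v + F b v = (coord a x - coord v x) * h (transpose a v ` x)
      - (coord b x - coord v x) * h (transpose b v ` x)" if "v \<in> M0" for v
  proof -
    have "transpose a v b = b" "transpose b v a = a" using that assms(3) by (auto simp: M0_def)
    then show ?thesis by (simp add: F_def g_def in_transpose_image_iff algebra_simps)
  qed
  ultimately have "(\<Sum>u\<in>M. \<Sum>v\<in>M. F u v) = 4 * g x * h x
      + 2 * ((real (card M0) - 2 * real (length B)) * g x * h x)"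
    unfolding M0(2) using sum_sum_symmetric_two_points[OF M0(1,3,4) assms(3), of F]
      sum_transpose_pair_chiAB[OF M0(1,5,3,4) assms(6-9), of x]
    by (simp add: F_def transpose_commute g_def h_def)
  moreover have "real (card M0) = real (card M) - 2"
    using M0 assms(3) by simp
  ultimately show ?thesis
    by (simp add: F_def g_def h_def algebra_simps)
qed

lemma swap_laplacian_chiAB:
  assumes "finite M" "set A \<union> set B \<subseteq> M"
    "length A = length B" "distinct A" "distinct B" "set A \<inter> set B = {}"
  shows "swap_laplacian M (chiAB A B) x
           = 2 * real (length B) * (real (card M) + 1 - real (length B)) * chiAB A B x"
  using assms(3-6,2)
proof (induction A B rule: list_induct2)
  case Nil
  then show ?case by (simp add: swap_laplacian_def)
next
  case (Cons a A b B)
  have IH: "swap_laplacian M (chiAB A B) x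
      = 2 * real (length B) * (real (card M) + 1 - real (length B)) * chiAB A B x"
    using Cons by simp
  have cross: "(\<Sum>u\<in>M. \<Sum>v\<in>M. (coord a x - coord b x - (coord a (transpose u v ` x) - coord b (transpose u v ` x)))
      * chiAB A B (transpose u v ` x)) = 2 * (real (card M) - 2 * real (length B)) * (coord a x - coord b x) * chiAB A B x"
    using Cons by (intro swap_cross_term_chiAB[OF assms(1)]) auto
  have "swap_laplacian M (chiAB (a # A) (b # B)) x
      = swap_laplacian M (\<lambda>y. (coord a y - coord b y) * chiAB A B y) x"
    by (rule swap_laplacian_cong) simp
  also have "\<dots> = (coord a x - coord b x) * swap_laplacian M (chiAB A B) x
      + 2 * (real (card M) - 2 * real (length B)) * (coord a x - coord b x) * chiAB A B x"
    by (simp only: swap_laplacian_mult cross)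
  also have "\<dots> = 2 * real (length (b # B)) * (real (card M) + 1 - real (length (b # B)))
      * ((coord a x - coord b x) * chiAB A B x)"
    unfolding IH by (simp add: algebra_simps del: of_bool_eq)
  finally show ?case
    by (simp only: chiAB_Cons[of a A b B x])
qed

section \<open>Factorization of the basis functions\<close>

lemma finite_seqs: "finite (seqs n d)"
proof -
  have "seqs n d \<subseteq> {s. set s \<subseteq> {1..n} \<and> length s = d}" by (auto simp: seqs_def)
  then show ?thesis using finite_lists_length_eq[of "{1..n}" d] finite_subset by auto
qed

lemma finite_below_seqs: "finite (below_seqs n B)"
  using finite_seqs by (simp add: below_seqs_def)

lemma finite_top_sets: "finite (top_sets n d)"
  using finite_seqs[of n d] by (rule finite_subset[rotated]) (auto simp: top_sets_def)

lemma below_seqs_nth: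
  assumes "A \<in> below_seqs n B" "i < length B"
  shows "1 \<le> A ! i" "A ! i < B ! i"
proof -
  have "length A = length B" "set A \<subseteq> {1..n}" "seq_less A B"
    using assms(1) by (auto simp: below_seqs_def seqs_def)
  then show "1 \<le> A ! i" "A ! i < B ! i"
    using assms(2) nth_mem[of i A] by (force simp: seq_less_def)+
qed

lemma seq_less_snoc:
  "length A = length B \<Longrightarrow> seq_less (A @ [a]) (B @ [b]) \<longleftrightarrow> seq_less A B \<and> a < b"
  by (auto simp: seq_less_def nth_append less_Suc_eq)

lemma snoc_mem_below_seqs_iff:
  assumes "sorted_wrt (<) (B @ [b])" "set (B @ [b]) \<subseteq> {1..n}"
  shows "A @ [a] \<in> below_seqs n (B @ [b]) \<longleftrightarrow> A \<in> below_seqs n B \<and> a \<in> {1..<b} - set B - set A"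
proof
  assume "A @ [a] \<in> below_seqs n (B @ [b])"
  then show "A \<in> below_seqs n B \<and> a \<in> {1..<b} - set B - set A"
    by (auto simp: below_seqs_def seqs_def seq_less_snoc)
next
  assume A: "A \<in> below_seqs n B \<and> a \<in> {1..<b} - set B - set A"
  then have len: "length A = length B" by (simp add: below_seqs_def seqs_def)
  have "b \<notin> set A"
  proof
    assume "b \<in> set A"
    then obtain i where i: "i < length B" "A ! i = b" using len by (auto simp: in_set_conv_nth)
    have "A ! i < B ! i" using A i(1) by (blast intro: below_seqs_nth)
    moreover have "B ! i < b" using assms(1) i(1) by (auto simp: sorted_wrt_append)
    ultimately show False using i(2) by simp
  qed
  then show "A @ [a] \<in> below_seqs n (B @ [b])"
    using A len assms(2) by (auto simp: below_seqs_def seqs_def seq_less_snoc)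
qed

lemma below_seqs_snoc:
  assumes "sorted_wrt (<) (B @ [b])" "set (B @ [b]) \<subseteq> {1..n}"
  shows "below_seqs n (B @ [b])
           = (\<lambda>(A, a). A @ [a]) ` (SIGMA A:below_seqs n B. {1..<b} - set B - set A)"
proof -
  have "A \<in> (\<lambda>(A, a). A @ [a]) ` (SIGMA A:below_seqs n B. {1..<b} - set B - set A)"
    if "A \<in> below_seqs n (B @ [b])" for A
  proof -
    have "A \<noteq> []"
      using that by (auto simp: below_seqs_def seqs_def)
    then have "A = butlast A @ [last A]" by simp
    then show ?thesis
      using that snoc_mem_below_seqs_iff[OF assms, of "butlast A" "last A"]
      by (auto intro!: image_eqI[where x = "(butlast A, last A)"])
  qed
  then show ?thesis
    using snoc_mem_below_seqs_iff[OF assms] by auto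
qed

lemma chiAB_snoc:
  "length A = length B \<Longrightarrow> chiAB (A @ [a]) (B @ [b]) x = chiAB A B x * (coord a x - coord b x)"
  by (simp add: chiAB_def nth_append)

lemma sum_coord_of_chiAB_nonzero:
  assumes "chiAB A B x \<noteq> 0" "length A = length B" "distinct A" "distinct B"
  shows "(\<Sum>a\<in>set A. coord a x) = real (length B) - (\<Sum>b\<in>set B. coord b x)"
proof -
  have "coord (A ! i) x = 1 - coord (B ! i) x" if "i < length B" for i
  proof -
    have "coord (A ! i) x - coord (B ! i) x \<noteq> 0"
      using assms(1) that unfolding chiAB_def by (simp add: prod_zero_iff)
    then show ?thesis by (simp add: of_bool_def split: if_splits)
  qed
  then have "(\<Sum>i<length B. coord (A ! i) x) = (\<Sum>i<length B. 1 - coord (B ! i) x)"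
    by simp
  then show ?thesis
    unfolding sum.reindex_bij_betw[OF bij_betw_nth[OF assms(3) refl refl], symmetric]
      sum.reindex_bij_betw[OF bij_betw_nth[OF assms(4) refl refl], symmetric]
    using assms(2) by (simp add: sum_subtractf)
qed

lemma below_seqs_snoc_candidates:
  assumes A: "A \<in> below_seqs n B" and B: "sorted_wrt (<) (B @ [b])" "set (B @ [b]) \<subseteq> {1..n}"
  shows "set A \<subseteq> {1..<b} - set B"
    and "real (card ({1..<b} - set B - set A)) = real b - 1 - 2 * real (length B)"
proof -
  have len: "length A = length B" and dA: "distinct A" and disj: "set A \<inter> set B = {}"
    using A by (auto simp: below_seqs_def seqs_def)
  have dB: "distinct B" using B(1) by (simp add: sorted_wrt_append strict_sorted_iff)
  have B_sub: "set B \<subseteq> {1..<b}" using B by (auto simp: sorted_wrt_append)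
  show A_sub: "set A \<subseteq> {1..<b} - set B"
  proof
    fix a assume "a \<in> set A"
    then obtain i where i: "i < length B" "a = A ! i" using len by (auto simp: in_set_conv_nth)
    have "B ! i < b" using B(1) i(1) by (auto simp: sorted_wrt_append)
    then show "a \<in> {1..<b} - set B"
      using below_seqs_nth[OF A i(1)] i disj \<open>a \<in> set A\<close> by auto
  qed
  have "card ({1..<b} - set B) = b - 1 - length B"
    using B_sub dB by (simp add: card_Diff_subset distinct_card)
  moreover have "card (set A) \<le> card ({1..<b} - set B)"
    using A_sub by (simp add: card_mono)
  moreover have "1 \<le> b" using B(2) by simp
  ultimately show "real (card ({1..<b} - set B - set A)) = real b - 1 - 2 * real (length B)"
    using A_sub dA len by (simp add: card_Diff_subset distinct_card of_nat_diff)
qed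

text \<open>If \<open>\<chi>\<^sub>A\<^sub>,\<^sub>B(x) \<noteq> 0\<close> with \<open>|B| = i\<close>, the admissible last entries \<open>a\<close> of
  \<open>A @ [a] < B @ [b]\<close> are the \<open>b - 1 - 2i\<close> elements of \<open>{1..<b} - set A - set B\<close>, on which
  \<open>x\<close> sums to \<open>(\<Sum>a<b. x\<^sub>a) - i\<close>; summing \<open>x\<^sub>a - x\<^sub>b\<close> over them gives this factor.\<close>

definition chi_factor :: "nat \<Rightarrow> nat \<Rightarrow> nat set \<Rightarrow> real" where
  "chi_factor b i x = (\<Sum>a\<in>{1..<b}. coord a x) - real i - (real b - 1 - 2 * real i) * coord b x"

lemma sum_snoc_chiAB:
  assumes A: "A \<in> below_seqs n B" and B: "sorted_wrt (<) (B @ [b])" "set (B @ [b]) \<subseteq> {1..n}"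
  shows "(\<Sum>a\<in>{1..<b} - set B - set A. chiAB (A @ [a]) (B @ [b]) x)
           = chiAB A B x * chi_factor b (length B) x"
proof -
  let ?U = "{1..<b} - set B - set A"
  note U = below_seqs_snoc_candidates[OF assms]
  have len: "length A = length B" and dA: "distinct A"
    using A by (auto simp: below_seqs_def seqs_def)
  have dB: "distinct B" using B(1) by (simp add: sorted_wrt_append strict_sorted_iff)
  have "(\<Sum>a\<in>?U. chiAB (A @ [a]) (B @ [b]) x) = chiAB A B x * (\<Sum>a\<in>?U. coord a x - coord b x)"
    by (simp add: chiAB_snoc[OF len] sum_distrib_left)
  also have "\<dots> = chiAB A B x * chi_factor b (length B) x"
  proof (cases "chiAB A B x = 0")
    case False
    have "(\<Sum>a\<in>?U. coord a x) = (\<Sum>a\<in>{1..<b} - set B. coord a x) - (\<Sum>a\<in>set A. coord a x)"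
      by (rule sum_diff) (use U(1) in auto)
    moreover have "(\<Sum>a\<in>{1..<b} - set B. coord a x) = (\<Sum>a\<in>{1..<b}. coord a x) - (\<Sum>a\<in>set B. coord a x)"
      by (rule sum_diff) (use U(1) B in \<open>auto simp: sorted_wrt_append\<close>)
    ultimately have "(\<Sum>a\<in>?U. coord a x) = (\<Sum>a\<in>{1..<b}. coord a x) - real (length B)"
      using sum_coord_of_chiAB_nonzero[OF False len dA dB] by linarith
    then show ?thesis
      unfolding sum_subtractf sum_constant chi_factor_def U(2) by simp
  qed simp
  finally show ?thesis .
qed

lemma chi_snoc:
  assumes "sorted_wrt (<) (B @ [b])" "set (B @ [b]) \<subseteq> {1..n}"
  shows "chi n (B @ [b]) x = chi n B x * chi_factor b (length B) x"
proof -
  let ?U = "\<lambda>A. {1..<b} - set B - set A"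
  have "chi n (B @ [b]) x = (\<Sum>(A, a)\<in>(SIGMA A:below_seqs n B. ?U A). chiAB (A @ [a]) (B @ [b]) x)"
    unfolding chi_def below_seqs_snoc[OF assms]
    by (subst sum.reindex) (auto simp: inj_on_def case_prod_beta)
  also have "\<dots> = (\<Sum>A\<in>below_seqs n B. \<Sum>a\<in>?U A. chiAB (A @ [a]) (B @ [b]) x)"
    by (rule sum.Sigma[symmetric]) (auto simp: finite_below_seqs)
  also have "\<dots> = (\<Sum>A\<in>below_seqs n B. chiAB A B x * chi_factor b (length B) x)"
    using sum_snoc_chiAB[OF _ assms] by simp
  finally show ?thesis
    by (simp add: chi_def sum_distrib_right)
qed

lemma chi_append:
  assumes "sorted_wrt (<) (C @ D)" "set (C @ D) \<subseteq> {1..n}"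
  shows "chi n (C @ D) x = chi n C x * (\<Prod>i<length D. chi_factor (D ! i) (length C + i) x)"
  using assms
proof (induction D rule: rev_induct)
  case Nil
  then show ?case by simp
next
  case (snoc d D)
  then have "chi n (C @ D) x = chi n C x * (\<Prod>i<length D. chi_factor (D ! i) (length C + i) x)"
    by (simp add: sorted_wrt_append)
  then show ?case
    using chi_snoc[of "C @ D" d n x] snoc.prems by (simp add: nth_append)
qed

section \<open>Eigenfunctions and orthogonality\<close>

lemma sorted_wrt_less_split:
  fixes B :: "nat list"
  assumes "sorted_wrt (<) B"
  obtains C D where "B = C @ D" "set C \<subseteq> {..m}" "\<forall>d\<in>set D. m < d"
proof
  let ?P = "\<lambda>b. b \<le> m"
  show "B = takeWhile ?P B @ dropWhile ?P B" by simp
  show "set (takeWhile ?P B) \<subseteq> {..m}" by (auto dest: set_takeWhileD)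
  show "\<forall>d\<in>set (dropWhile ?P B). m < d"
  proof (cases "dropWhile ?P B")
    case (Cons d D)
    have "m < d" using hd_dropWhile[of ?P B] Cons by simp
    moreover have "sorted_wrt (<) (d # D)"
      using assms Cons by (metis sorted_wrt_append takeWhile_dropWhile_id)
    ultimately show ?thesis using Cons by auto
  next
    case Nil
    then show ?thesis by (simp del: dropWhile_eq_Nil_conv)
  qed
qed

lemma sum_coord_transpose:
  assumes "u \<in> I" "v \<in> I"
  shows "(\<Sum>a\<in>I. coord a (transpose u v ` x)) = (\<Sum>a\<in>I. coord a x)"
  by (rule sum.reindex_bij_witness[where i = "transpose u v" and j = "transpose u v"])
    (use assms in \<open>auto simp: in_transpose_image_iff transpose_def\<close>)

lemma chi_factor_transpose:
  assumes "u \<in> {1..m}" "v \<in> {1..m}" "m < b"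
  shows "chi_factor b i (transpose u v ` x) = chi_factor b i x"
proof -
  have "transpose u v b = b" using assms by auto
  then show ?thesis
    unfolding chi_factor_def using sum_coord_transpose[of u "{1..<b}" v x] assms
    by (simp add: in_transpose_image_iff)
qed

lemma swap_laplacian_chi:
  assumes "sorted_wrt (<) C" "set C \<subseteq> {1..m}"
  shows "swap_laplacian {1..m} (chi n C) x = 2 * real (length C) * (real m + 1 - real (length C)) * chi n C x"
proof -
  have "swap_laplacian {1..m} (chiAB A C) x = 2 * real (length C) * (real m + 1 - real (length C)) * chiAB A C x"
    if A: "A \<in> below_seqs n C" for A
  proof -
    have "set A \<subseteq> {1..m}"
    proof
      fix a assume "a \<in> set A"
      then obtain i where "i < length C" "a = A ! i"
        using A by (auto simp: in_set_conv_nth below_seqs_def seqs_def)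
      then show "a \<in> {1..m}"
        using below_seqs_nth[OF A] assms(2) nth_mem[of i C] by fastforce
    qed
    moreover have "length A = length C" "distinct A" "set A \<inter> set C = {}"
      using A by (auto simp: below_seqs_def seqs_def)
    moreover have "distinct C" using assms(1) by (simp add: strict_sorted_iff)
    ultimately show ?thesis
      using swap_laplacian_chiAB[of "{1..m}" A C x] assms(2) by simp
  qed
  then show ?thesis
    unfolding chi_def swap_laplacian_sum[OF finite_below_seqs] sum_distrib_left by simp
qed

text \<open>The factors of the entries beyond \<open>m\<close> depend on \<open>x\<close> only through \<open>\<Sum>a<b. x\<^sub>a\<close> and
  \<open>x\<^sub>b\<close> with \<open>b > m\<close>, which transpositions inside \<open>{1..m}\<close> do not change.\<close>

lemma swap_laplacian_chi_append:
  assumes "sorted_wrt (<) (C @ D)" "set (C @ D) \<subseteq> {1..n}" "set C \<subseteq> {..m}" "\<forall>d\<in>set D. m < d"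
  shows "swap_laplacian {1..m} (chi n (C @ D)) x
           = 2 * real (length C) * (real m + 1 - real (length C)) * chi n (C @ D) x"
proof -
  define \<Phi> where "\<Phi> y = (\<Prod>i<length D. chi_factor (D ! i) (length C + i) y)" for y
  have C: "sorted_wrt (<) C" "set C \<subseteq> {1..m}"
    using assms(1) by (simp add: sorted_wrt_append) (use assms(2,3) in force)
  have "\<Phi> (transpose u v ` x) = \<Phi> x" if "u \<in> {1..m}" "v \<in> {1..m}" for u v
    unfolding \<Phi>_def using assms(4) that by (intro prod.cong refl chi_factor_transpose) auto
  then have "swap_laplacian {1..m} (\<lambda>y. chi n C y * \<Phi> y) x = \<Phi> x * swap_laplacian {1..m} (chi n C) x"
    by (rule swap_laplacian_mult_invariant)
  moreover have "swap_laplacian {1..m} (chi n (C @ D)) x = swap_laplacian {1..m} (\<lambda>y. chi n C y * \<Phi> y) x"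
    using chi_append[OF assms(1,2)] by (intro swap_laplacian_cong) (simp add: \<Phi>_def)
  ultimately show ?thesis
    using chi_append[OF assms(1,2)] swap_laplacian_chi[OF C] by (simp add: \<Phi>_def)
qed

lemma transpose_image_compl:
  assumes "u \<in> {1..n}" "v \<in> {1..n}"
  shows "{1..n} - transpose u v ` y = transpose u v ` ({1..n} - y)"
  using assms by (simp add: image_set_diff inj_transpose)

lemma swap_laplacian_compl:
  assumes "M \<subseteq> {1..n}"
  shows "swap_laplacian M (\<lambda>y. g ({1..n} - y)) x = swap_laplacian M g ({1..n} - x)"
  unfolding swap_laplacian_def using assms transpose_image_compl[of _ n]
  by (intro sum.cong refl) (simp add: subset_iff)

lemma swap_laplacian_slice_basis_append:
  assumes "sorted_wrt (<) (C @ D)" "set (C @ D) \<subseteq> {1..n}" "set C \<subseteq> {..m}" "\<forall>d\<in>set D. m < d"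
    "m \<le> n"
  shows "swap_laplacian {1..m} (slice_basis n r (C @ D)) x
           = 2 * real (length C) * (real m + 1 - real (length C)) * slice_basis n r (C @ D) x"
proof (cases "2 * r \<le> n")
  case True
  have "swap_laplacian {1..m} (slice_basis n r (C @ D)) x = swap_laplacian {1..m} (chi n (C @ D)) x"
    using True by (intro swap_laplacian_cong) (simp add: slice_basis_def)
  then show ?thesis
    using swap_laplacian_chi_append[OF assms(1-4)] True by (simp add: slice_basis_def)
next
  case False
  have "swap_laplacian {1..m} (slice_basis n r (C @ D)) x
      = swap_laplacian {1..m} (\<lambda>y. chi n (C @ D) ({1..n} - y)) x"
    using False by (intro swap_laplacian_cong) (simp add: slice_basis_def)
  also have "\<dots> = swap_laplacian {1..m} (chi n (C @ D)) ({1..n} - x)"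
    using assms(5) by (intro swap_laplacian_compl) auto
  finally show ?thesis
    using swap_laplacian_chi_append[OF assms(1-4)] False by (simp add: slice_basis_def)
qed

lemma finite_slice: "finite (slice n r)"
  by (rule finite_subset[of _ "Pow {1..n}"]) (auto simp: slice_def)

lemma transpose_image_slice:
  assumes "u \<in> {1..n}" "v \<in> {1..n}" "x \<in> slice n r"
  shows "transpose u v ` x \<in> slice n r"
proof -
  have "transpose u v ` x \<subseteq> transpose u v ` {1..n}"
    using assms(3) by (auto simp: slice_def)
  then show ?thesis
    using assms by (simp add: slice_def card_image inj_on_transpose)
qed

lemma sum_slice_transpose:
  assumes "u \<in> {1..n}" "v \<in> {1..n}"
  shows "(\<Sum>x\<in>slice n r. F (transpose u v ` x)) = (\<Sum>x\<in>slice n r. F x)"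
  by (rule sum.reindex_bij_witness[where i = "(`) (transpose u v)" and j = "(`) (transpose u v)"])
    (auto intro: transpose_image_slice[OF assms] simp: image_image)

lemma swap_laplacian_self_adjoint:
  assumes "M \<subseteq> {1..n}"
  shows "(\<Sum>x\<in>slice n r. swap_laplacian M g x * h x) = (\<Sum>x\<in>slice n r. g x * swap_laplacian M h x)"
proof -
  have swap: "(\<Sum>x\<in>slice n r. g (transpose u v ` x) * h x) = (\<Sum>x\<in>slice n r. g x * h (transpose u v ` x))"
    if "u \<in> M" "v \<in> M" for u v
  proof -
    have "u \<in> {1..n}" "v \<in> {1..n}" using that assms by blast+
    then show ?thesis
      using sum_slice_transpose[where u = u and v = v and n = n and r = r
          and F = "\<lambda>x. g x * h (transpose u v ` x)"] by (simp add: image_image)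
  qed
  have "(\<Sum>x\<in>slice n r. swap_laplacian M g x * h x)
      = (\<Sum>u\<in>M. \<Sum>v\<in>M. (\<Sum>x\<in>slice n r. g x * h x) - (\<Sum>x\<in>slice n r. g (transpose u v ` x) * h x))"
    unfolding swap_laplacian_def sum_distrib_right
    by (simp add: sum.swap[of _ "slice n r"] sum_subtractf[symmetric] algebra_simps)
  also have "\<dots> = (\<Sum>u\<in>M. \<Sum>v\<in>M. (\<Sum>x\<in>slice n r. g x * h x) - (\<Sum>x\<in>slice n r. g x * h (transpose u v ` x)))"
    using swap by (intro sum.cong refl) auto
  also have "\<dots> = (\<Sum>x\<in>slice n r. g x * swap_laplacian M h x)"
    unfolding swap_laplacian_def sum_distrib_left
    by (simp add: sum.swap[of _ "slice n r"] sum_subtractf[symmetric] algebra_simps)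
  finally show ?thesis .
qed

lemma eigenvectors_orthogonal:
  fixes g h Lg Lh :: "'a \<Rightarrow> real"
  assumes "(\<Sum>x\<in>S. Lg x * h x) = (\<Sum>x\<in>S. g x * Lh x)"
    "\<And>x. x \<in> S \<Longrightarrow> Lg x = \<alpha> * g x" "\<And>x. x \<in> S \<Longrightarrow> Lh x = \<mu> * h x" "\<alpha> \<noteq> \<mu>"
  shows "(\<Sum>x\<in>S. g x * h x) = 0"
proof -
  have "\<alpha> * (\<Sum>x\<in>S. g x * h x) = \<mu> * (\<Sum>x\<in>S. g x * h x)"
    using assms(1-3) by (simp add: sum_distrib_left algebra_simps)
  then show ?thesis using assms(4) by simp
qed

lemma exists_prefix_card_neq:
  fixes X Y :: "nat set"
  assumes "finite X" "finite Y" "X \<noteq> Y"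
  obtains m where "m \<in> X \<union> Y" "card (X \<inter> {..m}) \<noteq> card (Y \<inter> {..m})"
proof -
  define m where "m = Min ((X - Y) \<union> (Y - X))"
  have m: "m \<in> (X - Y) \<union> (Y - X)"
    unfolding m_def using assms by (intro Min_in) auto
  have below: "X \<inter> {..<m} = Y \<inter> {..<m}"
    using Min_le[of "(X - Y) \<union> (Y - X)"] assms(1,2) by (fastforce simp: m_def)
  have "card (X \<inter> {..m}) \<noteq> card (Y \<inter> {..m})"
  proof -
    have split: "Z \<inter> {..m} = (if m \<in> Z then insert m (Z \<inter> {..<m}) else Z \<inter> {..<m})" for Z :: "nat set"
      by (auto simp: le_less)
    show ?thesis
      using m below assms(1,2) by (auto simp: split)
  qed
  then show ?thesis using that m by blast
qed

lemma top_sets_prefix_length: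
  assumes "C @ D \<in> top_sets n e" "set C \<subseteq> {..m}"
  shows "2 * length C \<le> m"
proof -
  obtain A where A: "A \<in> below_seqs n (C @ D)" using assms(1) by (auto simp: top_sets_def)
  have len: "length A = length C + length D" and dA: "distinct A"
    and disj: "set A \<inter> set (C @ D) = {}" using A by (auto simp: below_seqs_def seqs_def)
  have dC: "distinct C" using assms(1) by (auto simp: top_sets_def seqs_def)
  have C: "set C \<subseteq> {1..m}" using assms by (force simp: top_sets_def seqs_def)
  have A': "set (take (length C) A) \<subseteq> {1..m}"
  proof
    fix a assume "a \<in> set (take (length C) A)"
    then obtain i where i: "i < length C" "a = A ! i" using len by (auto simp: in_set_conv_nth)
    then have "C ! i \<le> m" using assms(2) nth_mem[OF i(1)] by blast
    then show "a \<in> {1..m}"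
      using below_seqs_nth[OF A, of i] i by (simp add: nth_append)
  qed
  have "set (take (length C) A) \<inter> set C = {}" using disj set_take_subset by fastforce
  then have "card (set (take (length C) A) \<union> set C) = 2 * length C"
    using dA dC len by (simp add: card_Un_disjoint distinct_card)
  moreover have "card (set (take (length C) A) \<union> set C) \<le> card {1..m}"
    using A' C by (intro card_mono) auto
  ultimately show ?thesis by simp
qed

lemma swap_laplacian_slice_basis_prefix:
  assumes "B \<in> top_sets n e" "m \<le> n"
  defines "j \<equiv> card (set B \<inter> {..m})"
  shows "swap_laplacian {1..m} (slice_basis n r B) x = 2 * real j * (real m + 1 - real j) * slice_basis n r B x"
    and "2 * j \<le> m"
proof -
  have B: "sorted_wrt (<) B" "set B \<subseteq> {1..n}" using assms(1) by (auto simp: top_sets_def seqs_def)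
  obtain C D where CD: "B = C @ D" "set C \<subseteq> {..m}" "\<forall>d\<in>set D. m < d"
    using sorted_wrt_less_split[OF B(1)] .
  have "set B \<inter> {..m} = set C" using CD by auto
  then have j: "j = length C"
    using B(1) CD(1) by (simp add: j_def distinct_card strict_sorted_iff)
  show "swap_laplacian {1..m} (slice_basis n r B) x = 2 * real j * (real m + 1 - real j) * slice_basis n r B x"
    using swap_laplacian_slice_basis_append[of C D n m r x] B CD assms(2) j by simp
  show "2 * j \<le> m"
    using top_sets_prefix_length[of C D n e m] assms(1) CD j by simp
qed

text \<open>At the least element \<open>m\<close> on which \<open>set B\<close> and \<open>set B'\<close> differ, the two counts of entries
  \<open>\<le> m\<close> differ; as both are at most \<open>m/2\<close>, the eigenvalues \<open>2j(m + 1 - j)\<close> of the Laplacian on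
  \<open>{1..m}\<close> differ as well.\<close>

lemma slice_basis_orthogonal:
  assumes "B \<in> top_sets n e" "B' \<in> top_sets n e'" "B \<noteq> B'"
  shows "(\<Sum>x\<in>slice n r. slice_basis n r B x * slice_basis n r B' x) = 0"
proof -
  have "sorted_wrt (<) B" "sorted_wrt (<) B'"
    using assms(1,2) by (auto simp: top_sets_def)
  then have "set B \<noteq> set B'"
    using assms(3) by (metis sorted_distinct_set_unique strict_sorted_iff)
  then obtain m where m: "m \<in> set B \<union> set B'" "card (set B \<inter> {..m}) \<noteq> card (set B' \<inter> {..m})"
    by (rule exists_prefix_card_neq[rotated 2]) auto
  have "m \<le> n" using m(1) assms(1,2) by (auto simp: top_sets_def seqs_def)
  note eig = swap_laplacian_slice_basis_prefix[OF assms(1) this] swap_laplacian_slice_basis_prefix[OF assms(2) this]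
  define j where "j = card (set B \<inter> {..m})"
  define j' where "j' = card (set B' \<inter> {..m})"
  have "real j \<noteq> real j'" "real m + 1 - real j - real j' \<noteq> 0"
    using eig(2,4) m(2) by (auto simp: j_def j'_def)
  then have "(real j - real j') * (real m + 1 - real j - real j') \<noteq> 0"
    by simp
  moreover have "2 * real j * (real m + 1 - real j) - 2 * real j' * (real m + 1 - real j')
      = 2 * ((real j - real j') * (real m + 1 - real j - real j'))"
    by (simp add: algebra_simps)
  ultimately have "2 * real j * (real m + 1 - real j) \<noteq> 2 * real j' * (real m + 1 - real j')"
    by (metis eq_iff_diff_eq_0 mult_eq_0_iff zero_neq_numeral)
  then show ?thesis
  proof (rule eigenvectors_orthogonal[rotated 3])
    show "(\<Sum>x\<in>slice n r. swap_laplacian {1..m} (slice_basis n r B) x * slice_basis n r B' x)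
        = (\<Sum>x\<in>slice n r. slice_basis n r B x * swap_laplacian {1..m} (slice_basis n r B') x)"
      using \<open>m \<le> n\<close> by (intro swap_laplacian_self_adjoint) auto
  qed (use eig in \<open>simp_all add: j_def j'_def\<close>)
qed

section \<open>A Bessel inequality for the high-level weight\<close>

lemma swap_laplacian_slice_basis:
  assumes "B \<in> top_sets n e"
  shows "swap_laplacian {1..n} (slice_basis n r B) x = 2 * real e * (real n + 1 - real e) * slice_basis n r B x"
proof -
  have "set B \<inter> {..n} = set B" "distinct B" "length B = e"
    using assms by (auto simp: top_sets_def seqs_def)
  then show ?thesis
    using swap_laplacian_slice_basis_prefix(1)[OF assms order.refl] by (simp add: distinct_card)
qed

lemma swap_energy_nonneg: "0 \<le> (\<Sum>x\<in>slice n r. swap_laplacian {1..n} g x * g x)"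
proof -
  have "(\<Sum>x\<in>slice n r. g (transpose u v ` x) * g x) \<le> (\<Sum>x\<in>slice n r. g x * g x)"
    if "u \<in> {1..n}" "v \<in> {1..n}" for u v
  proof -
    have "(\<Sum>x\<in>slice n r. g (transpose u v ` x) * g x)
        \<le> (\<Sum>x\<in>slice n r. (g (transpose u v ` x) * g (transpose u v ` x) + g x * g x) / 2)"
    proof (intro sum_mono)
      fix x
      have "0 \<le> (g (transpose u v ` x) - g x)\<^sup>2" by simp
      then show "g (transpose u v ` x) * g x \<le> (g (transpose u v ` x) * g (transpose u v ` x) + g x * g x) / 2"
        by (simp add: power2_eq_square algebra_simps)
    qed
    also have "\<dots> = (\<Sum>x\<in>slice n r. g x * g x)"
      using sum_slice_transpose[OF that, of "\<lambda>y. g y * g y"]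
      by (simp add: sum_divide_distrib[symmetric] sum.distrib)
    finally show ?thesis .
  qed
  then have "0 \<le> (\<Sum>u\<in>{1..n}. \<Sum>v\<in>{1..n}.
      (\<Sum>x\<in>slice n r. g x * g x) - (\<Sum>x\<in>slice n r. g (transpose u v ` x) * g x))"
    by (intro sum_nonneg) auto
  also have "\<dots> = (\<Sum>x\<in>slice n r. swap_laplacian {1..n} g x * g x)"
    unfolding swap_laplacian_def sum_distrib_right
    by (simp add: sum.swap[of _ "slice n r"] sum_subtractf[symmetric] algebra_simps)
  finally show ?thesis .

qed

lemma swap_energy_diff:
  "(\<Sum>x\<in>slice n r. swap_laplacian {1..n} (\<lambda>y. f y - g y) x * (f x - g x))
     = (\<Sum>x\<in>slice n r. swap_laplacian {1..n} f x * f x) - 2 * (\<Sum>x\<in>slice n r. swap_laplacian {1..n} f x * g x)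
       + (\<Sum>x\<in>slice n r. swap_laplacian {1..n} g x * g x)"
proof -
  have "(\<Sum>x\<in>slice n r. swap_laplacian {1..n} g x * f x) = (\<Sum>x\<in>slice n r. swap_laplacian {1..n} f x * g x)"
    using swap_laplacian_self_adjoint[where M = "{1..n}" and n = n and r = r and g = g and h = f] by (simp add: mult.commute)
  then show ?thesis
    unfolding swap_laplacian_diff by (simp add: sum_subtractf sum.distrib algebra_simps)
qed

lemma swap_energy_eigen_combination:
  fixes h :: "'b \<Rightarrow> nat set \<Rightarrow> real" and \<mu> c :: "'b \<Rightarrow> real"
  assumes "finite I"
    and eigen: "\<And>i x. i \<in> I \<Longrightarrow> swap_laplacian {1..n} (h i) x = \<mu> i * h i x"
    and orth: "\<And>i j. i \<in> I \<Longrightarrow> j \<in> I \<Longrightarrow> i \<noteq> j \<Longrightarrow> (\<Sum>x\<in>slice n r. h i x * h j x) = 0"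
  shows "(\<Sum>x\<in>slice n r. swap_laplacian {1..n} f x * (\<Sum>i\<in>I. c i * h i x))
           = (\<Sum>i\<in>I. c i * \<mu> i * (\<Sum>x\<in>slice n r. f x * h i x))"
    and "(\<Sum>x\<in>slice n r. swap_laplacian {1..n} (\<lambda>y. \<Sum>i\<in>I. c i * h i y) x * (\<Sum>i\<in>I. c i * h i x))
           = (\<Sum>i\<in>I. (c i)\<^sup>2 * \<mu> i * (\<Sum>x\<in>slice n r. h i x * h i x))"
proof -
  let ?S = "slice n r"
  define G where "G x = (\<Sum>i\<in>I. c i * h i x)" for x
  have "(\<Sum>x\<in>?S. swap_laplacian {1..n} f x * h i x) = \<mu> i * (\<Sum>x\<in>?S. f x * h i x)" if "i \<in> I" for i
    using swap_laplacian_self_adjoint[where M = "{1..n}" and n = n and r = r and g = f and h = "h i"] eigen[OF that]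
    by (simp add: sum_distrib_left algebra_simps)
  moreover have "(\<Sum>x\<in>?S. swap_laplacian {1..n} f x * G x) = (\<Sum>i\<in>I. c i * (\<Sum>x\<in>?S. swap_laplacian {1..n} f x * h i x))"
    unfolding G_def by (simp add: sum_distrib_left sum.swap[of _ ?S] algebra_simps)
  ultimately show "(\<Sum>x\<in>?S. swap_laplacian {1..n} f x * (\<Sum>i\<in>I. c i * h i x)) = (\<Sum>i\<in>I. c i * \<mu> i * (\<Sum>x\<in>?S. f x * h i x))"
    by (simp add: mult.assoc G_def)
  have h_G: "(\<Sum>x\<in>?S. h i x * G x) = c i * (\<Sum>x\<in>?S. h i x * h i x)" if "i \<in> I" for i
  proof -
    have "(\<Sum>x\<in>?S. h i x * G x) = (\<Sum>j\<in>I. c j * (\<Sum>x\<in>?S. h i x * h j x))"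
      unfolding G_def by (simp add: sum_distrib_left sum.swap[of _ ?S] algebra_simps)
    also have "\<dots> = c i * (\<Sum>x\<in>?S. h i x * h i x) + (\<Sum>j\<in>I - {i}. c j * (\<Sum>x\<in>?S. h i x * h j x))"
      using that assms(1) by (simp add: sum.remove)
    also have "(\<Sum>j\<in>I - {i}. c j * (\<Sum>x\<in>?S. h i x * h j x)) = 0"
      using orth that by (intro sum.neutral) auto
    finally show ?thesis by simp
  qed
  have "swap_laplacian {1..n} G x = (\<Sum>i\<in>I. c i * \<mu> i * h i x)" for x
    unfolding G_def swap_laplacian_sum[OF assms(1)] swap_laplacian_scale
    using eigen by (intro sum.cong refl) simp
  then have "(\<Sum>x\<in>?S. swap_laplacian {1..n} G x * G x) = (\<Sum>i\<in>I. c i * \<mu> i * (\<Sum>x\<in>?S. h i x * G x))"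
    by (simp add: sum_distrib_left sum_distrib_right sum.swap[of _ ?S] algebra_simps)
  also have "\<dots> = (\<Sum>i\<in>I. (c i)\<^sup>2 * \<mu> i * (\<Sum>x\<in>?S. h i x * h i x))"
    using h_G by (simp add: power2_eq_square algebra_simps)
  finally show "(\<Sum>x\<in>?S. swap_laplacian {1..n} (\<lambda>y. \<Sum>i\<in>I. c i * h i y) x * (\<Sum>i\<in>I. c i * h i x))
      = (\<Sum>i\<in>I. (c i)\<^sup>2 * \<mu> i * (\<Sum>x\<in>?S. h i x * h i x))"
    by (simp add: G_def[abs_def])
qed

lemma bessel_swap_laplacian:
  fixes h :: "'b \<Rightarrow> nat set \<Rightarrow> real" and \<mu> :: "'b \<Rightarrow> real"
  assumes "finite I"
    and eigen: "\<And>i x. i \<in> I \<Longrightarrow> swap_laplacian {1..n} (h i) x = \<mu> i * h i x"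
    and orth: "\<And>i j. i \<in> I \<Longrightarrow> j \<in> I \<Longrightarrow> i \<noteq> j \<Longrightarrow> (\<Sum>x\<in>slice n r. h i x * h j x) = 0"
  shows "(\<Sum>i\<in>I. \<mu> i * (\<Sum>x\<in>slice n r. f x * h i x)\<^sup>2 / (\<Sum>x\<in>slice n r. h i x * h i x))
           \<le> (\<Sum>x\<in>slice n r. swap_laplacian {1..n} f x * f x)"
proof -
  define ip where "ip i = (\<Sum>x\<in>slice n r. f x * h i x)" for i
  define N where "N i = (\<Sum>x\<in>slice n r. h i x * h i x)" for i
  define c where "c i = ip i / N i" for i
  let ?G = "\<lambda>x. \<Sum>i\<in>I. c i * h i x"
  have cross: "(\<Sum>x\<in>slice n r. swap_laplacian {1..n} f x * ?G x) = (\<Sum>i\<in>I. c i * \<mu> i * ip i)"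
    unfolding ip_def using assms by (rule swap_energy_eigen_combination(1))
  have quad: "(\<Sum>x\<in>slice n r. swap_laplacian {1..n} ?G x * ?G x) = (\<Sum>i\<in>I. (c i)\<^sup>2 * \<mu> i * N i)"
    unfolding N_def using assms by (rule swap_energy_eigen_combination(2))
  have coeff: "c i * \<mu> i * ip i = \<mu> i * (ip i)\<^sup>2 / N i" "(c i)\<^sup>2 * \<mu> i * N i = \<mu> i * (ip i)\<^sup>2 / N i"
    for i by (simp_all add: c_def power2_eq_square)
  have "0 \<le> (\<Sum>x\<in>slice n r. swap_laplacian {1..n} (\<lambda>y. f y - ?G y) x * (f x - ?G x))"
    by (rule swap_energy_nonneg)
  then show ?thesis
    unfolding swap_energy_diff[where g = ?G] cross quad coeff by (simp add: ip_def N_def)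
qed

lemma card_slice_pos: "r \<le> n \<Longrightarrow> 0 < card (slice n r)"
proof -
  assume "r \<le> n"
  then have "{1..r} \<in> slice n r" by (auto simp: slice_def)
  then show ?thesis using finite_slice card_gt_0_iff by blast
qed

lemma normalized_square_weight:
  fixes a b K :: real
  assumes "K > 0"
  shows "((a / K) / (b / K))\<^sup>2 * (b / K) = a\<^sup>2 / (K * b)"
  using assms by (cases "b = 0") (simp_all add: field_simps power2_eq_square)

lemma weight_gt_eq_sum:
  assumes "r \<le> n"
  shows "weight_gt n r f d
           = (\<Sum>B\<in>(\<Union>e\<in>{d<..min r (n - r)}. top_sets n e).
                (\<Sum>x\<in>slice n r. f x * slice_basis n r B x)\<^sup>2
                / (real (card (slice n r)) * (\<Sum>x\<in>slice n r. slice_basis n r B x * slice_basis n r B x)))"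
    (is "_ = (\<Sum>B\<in>_. ?w B)")
proof -
  have K: "real (card (slice n r)) > 0" using card_slice_pos[OF assms] by simp
  have "(fourier_coeff n r f B)\<^sup>2 * slice_ip n r (slice_basis n r B) (slice_basis n r B) = ?w B" for B
    unfolding fourier_coeff_def slice_ip_def by (rule normalized_square_weight[OF K])
  then have "weight_gt n r f d = (\<Sum>e\<in>{d<..min r (n - r)}. \<Sum>B\<in>top_sets n e. ?w B)"
    unfolding weight_gt_def level_weight_def by simp
  also have "\<dots> = (\<Sum>B\<in>(\<Union>e\<in>{d<..min r (n - r)}. top_sets n e). ?w B)"
    by (rule sum.UNION_disjoint[symmetric]) (simp_all add: finite_top_sets, auto simp: top_sets_def seqs_def)
  finally show ?thesis .
qed

lemma weight_gt_le_swap_energy: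
  assumes "r \<le> n"
  defines "m \<equiv> min r (n - r)"
  shows "weight_gt n r f d \<le> (\<Sum>x\<in>slice n r. swap_laplacian {1..n} f x * f x)
           / (real (card (slice n r)) * (2 * (real d + 1) * (real n + 1 - real m)))"
proof -
  let ?S = "slice n r"
  let ?h = "slice_basis n r"
  define K where "K = real (card ?S)"
  define q where "q B = (\<Sum>x\<in>?S. f x * ?h B x)\<^sup>2 / (\<Sum>x\<in>?S. ?h B x * ?h B x)" for B
  define \<mu> where "\<mu> B = 2 * real (length B) * (real n + 1 - real (length B))" for B :: "nat list"
  define \<Lambda> where "\<Lambda> = 2 * (real d + 1) * (real n + 1 - real m)"
  define BB where "BB = (\<Union>e\<in>{d<..m}. top_sets n e)"
  have K: "K > 0" using card_slice_pos[OF assms(1)] by (simp add: K_def)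
  have \<Lambda>: "\<Lambda> > 0" by (simp add: \<Lambda>_def m_def)
  have top: "B \<in> top_sets n (length B)" if "B \<in> BB" for B
    using that by (auto simp: BB_def top_sets_def seqs_def)
  have "q B / K \<le> \<mu> B * q B / (K * \<Lambda>)" if "B \<in> BB" for B
  proof -
    have "d + 1 \<le> length B" "length B \<le> m" "m \<le> n"
      using that by (auto simp: BB_def top_sets_def seqs_def m_def)
    then have "(real d + 1) * (real n + 1 - real m) \<le> real (length B) * (real n + 1 - real (length B))"
      by (intro mult_mono) auto
    then have "\<Lambda> \<le> \<mu> B" unfolding \<Lambda>_def \<mu>_def by linarith
    then have "1 \<le> \<mu> B / \<Lambda>" using \<Lambda> by simp
    moreover have "0 \<le> q B" by (simp add: q_def sum_nonneg)
    ultimately have "1 * q B \<le> \<mu> B / \<Lambda> * q B" by (rule mult_right_mono)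
    then have "q B / K \<le> \<mu> B / \<Lambda> * q B / K" using K by (intro divide_right_mono) auto
    then show ?thesis by (simp add: ac_simps)
  qed
  then have "(\<Sum>B\<in>BB. q B / K) \<le> (\<Sum>B\<in>BB. \<mu> B * q B) / (K * \<Lambda>)"
    unfolding sum_divide_distrib by (rule sum_mono)
  moreover have "weight_gt n r f d = (\<Sum>B\<in>BB. q B / K)"
    unfolding weight_gt_eq_sum[OF assms(1)] by (simp add: q_def K_def BB_def m_def mult.commute)
  ultimately have "weight_gt n r f d \<le> (\<Sum>B\<in>BB. \<mu> B * q B) / (K * \<Lambda>)"
    by simp
  also have "\<dots> \<le> (\<Sum>x\<in>?S. swap_laplacian {1..n} f x * f x) / (K * \<Lambda>)"
  proof (rule divide_right_mono)
    show "(\<Sum>B\<in>BB. \<mu> B * q B) \<le> (\<Sum>x\<in>?S. swap_laplacian {1..n} f x * f x)"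
      unfolding q_def times_divide_eq_right
    proof (rule bessel_swap_laplacian)
      show "finite BB" by (simp add: BB_def finite_top_sets)
      show "swap_laplacian {1..n} (?h B) x = \<mu> B * ?h B x" if "B \<in> BB" for B x
        using swap_laplacian_slice_basis[OF top[OF that]] by (simp add: \<mu>_def)
      show "(\<Sum>x\<in>?S. ?h B x * ?h B' x) = 0" if "B \<in> BB" "B' \<in> BB" "B \<noteq> B'" for B B'
        using slice_basis_orthogonal[OF top[OF that(1)] top[OF that(2)] that(3)] .
    qed
  qed (use K \<Lambda> in simp)
  finally show ?thesis by (simp add: K_def \<Lambda>_def)
qed

section \<open>Edge flips\<close>

definition edge_flip :: "(nat set \<Rightarrow> real) \<Rightarrow> nat set \<Rightarrow> nat \<Rightarrow> real" where
  "edge_flip f x u = of_bool (f x \<noteq> f (insert u x))"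

definition flip_count :: "nat \<Rightarrow> nat \<Rightarrow> (nat set \<Rightarrow> real) \<Rightarrow> real" where
  "flip_count n r f = (\<Sum>x\<in>slice n r. \<Sum>u\<in>{1..n} - x. edge_flip f x u)"

lemma sum_coord_slice: "x \<in> slice n r \<Longrightarrow> (\<Sum>v\<in>{1..n}. coord v x) = real r"
  by (auto simp: slice_def Int_absorb1 simp flip: sum.inter_filter Int_def)

lemma sum_coord_complement:
  "finite A \<Longrightarrow> (\<Sum>u\<in>A. (1 - coord u x) * F u) = (\<Sum>u\<in>A - x. F u)"
proof -
  assume "finite A"
  have "(\<Sum>u\<in>A. (1 - coord u x) * F u) = (\<Sum>u\<in>A. if u \<notin> x then F u else 0)"
    by (intro sum.cong) auto
  also have "\<dots> = (\<Sum>u\<in>A - x. F u)"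
    using \<open>finite A\<close> by (simp add: sum.inter_filter Diff_eq Int_def)
  finally show ?thesis .
qed

lemma sum_pairs_edge_flip:
  assumes "x \<in> slice n r"
  shows "(\<Sum>u\<in>{1..n}. \<Sum>v\<in>{1..n}. (1 - coord u x) * coord v x * edge_flip f x u)
           = real r * (\<Sum>u\<in>{1..n} - x. edge_flip f x u)"
proof -
  have "(\<Sum>v\<in>{1..n}. (1 - coord u x) * coord v x * edge_flip f x u)
      = (1 - coord u x) * (real r * edge_flip f x u)" for u
    unfolding sum_distrib_left[symmetric] sum_distrib_right[symmetric] sum_coord_slice[OF assms]
    by (simp only: mult_ac)
  then show ?thesis
    by (simp only: sum_coord_complement[OF finite_atLeastAtMost] sum_distrib_left)
qed

lemma flip_le_edge_flips:
  "of_bool (f x \<noteq> f (transpose u v ` x))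
     \<le> (1 - coord u x) * coord v x * (edge_flip f x u + edge_flip f (transpose u v ` x) v)
       + (1 - coord v x) * coord u x * (edge_flip f x v + edge_flip f (transpose u v ` x) u)"
proof -
  consider "u \<notin> x" "v \<in> x" | "u \<in> x" "v \<notin> x" | "u \<in> x \<longleftrightarrow> v \<in> x" by blast
  then show ?thesis
  proof cases
    case 1
    then have "insert v (transpose u v ` x) = insert u x"
      by (auto simp: in_transpose_image_iff transpose_def)
    then show ?thesis using 1 by (auto simp: edge_flip_def)
  next
    case 2
    then have "insert u (transpose u v ` x) = insert v x"
      by (auto simp: in_transpose_image_iff transpose_def)
    then show ?thesis using 2 by (auto simp: edge_flip_def)
  qed simp
qed

lemma sum_edge_flip_transposed:
  "(\<Sum>x\<in>slice n r. \<Sum>u\<in>{1..n}. \<Sum>v\<in>{1..n}. (1 - coord u x) * coord v x * edge_flip f (transpose u v ` x) v)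
     = (\<Sum>x\<in>slice n r. \<Sum>u\<in>{1..n}. \<Sum>v\<in>{1..n}. (1 - coord u x) * coord v x * edge_flip f x u)"
proof -
  have "(\<Sum>x\<in>slice n r. (1 - coord u x) * coord v x * edge_flip f (transpose u v ` x) v)
      = (\<Sum>x\<in>slice n r. (1 - coord v x) * coord u x * edge_flip f x v)"
    if "u \<in> {1..n}" "v \<in> {1..n}" for u v
    using sum_slice_transpose[OF that, of "\<lambda>y. (1 - coord v y) * coord u y * edge_flip f y v" r]
    by (simp add: image_image in_transpose_image_iff)
  then have "(\<Sum>u\<in>{1..n}. \<Sum>v\<in>{1..n}. \<Sum>x\<in>slice n r. (1 - coord u x) * coord v x * edge_flip f (transpose u v ` x) v)
      = (\<Sum>u\<in>{1..n}. \<Sum>v\<in>{1..n}. \<Sum>x\<in>slice n r. (1 - coord v x) * coord u x * edge_flip f x v)"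
    by simp
  then have "(\<Sum>x\<in>slice n r. \<Sum>u\<in>{1..n}. \<Sum>v\<in>{1..n}. (1 - coord u x) * coord v x * edge_flip f (transpose u v ` x) v)
      = (\<Sum>x\<in>slice n r. \<Sum>u\<in>{1..n}. \<Sum>v\<in>{1..n}. (1 - coord v x) * coord u x * edge_flip f x v)"
    by (simp add: sum.swap[of _ "slice n r"] sum.swap[of _ "{1..n}" "slice n r"])
  also have "\<dots> = (\<Sum>x\<in>slice n r. \<Sum>u\<in>{1..n}. \<Sum>v\<in>{1..n}. (1 - coord u x) * coord v x * edge_flip f x u)"
    by (rule sum.cong[OF refl]) (rule sum.swap)
  finally show ?thesis .
qed

lemma swap_energy_sign_function:
  assumes "\<forall>x\<in>slice n r. f x \<in> {-1, 1}"
  shows "(\<Sum>x\<in>slice n r. swap_laplacian {1..n} f x * f x)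
           = (\<Sum>x\<in>slice n r. \<Sum>u\<in>{1..n}. \<Sum>v\<in>{1..n}. 2 * of_bool (f x \<noteq> f (transpose u v ` x)))"
  unfolding swap_laplacian_def sum_distrib_right
proof (intro sum.cong refl)
  fix x u v assume "x \<in> slice n r" "u \<in> {1..n}" "v \<in> {1..n}"
  then have "f x \<in> {-1, 1}" "f (transpose u v ` x) \<in> {-1, 1}"
    using assms transpose_image_slice by auto
  then show "(f x - f (transpose u v ` x)) * f x = 2 * of_bool (f x \<noteq> f (transpose u v ` x))"
    by auto
qed

lemma swap_energy_le_flip_count:
  assumes "\<forall>x\<in>cube n. f x \<in> {-1, 1}"
  shows "(\<Sum>x\<in>slice n r. swap_laplacian {1..n} f x * f x) \<le> 8 * real r * flip_count n r f"
proof -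
  let ?S = "slice n r"
  let ?N = "{1..n}"
  define A where "A x u v = (1 - coord u x) * coord v x * (edge_flip f x u + edge_flip f (transpose u v ` x) v)"
    for x u v
  have "\<forall>x\<in>?S. f x \<in> {-1, 1}" using assms by (auto simp: slice_def cube_def)
  then have "(\<Sum>x\<in>?S. swap_laplacian ?N f x * f x) = (\<Sum>x\<in>?S. \<Sum>u\<in>?N. \<Sum>v\<in>?N. 2 * of_bool (f x \<noteq> f (transpose u v ` x)))"
    by (rule swap_energy_sign_function)
  also have "\<dots> \<le> (\<Sum>x\<in>?S. \<Sum>u\<in>?N. \<Sum>v\<in>?N. 2 * (A x u v + A x v u))"
  proof (intro sum_mono)
    fix x u v
    have "of_bool (f x \<noteq> f (transpose u v ` x)) \<le> A x u v + A x v u"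
      using flip_le_edge_flips[of f x u v] unfolding A_def transpose_commute[of v u] .
    then show "2 * of_bool (f x \<noteq> f (transpose u v ` x)) \<le> 2 * (A x u v + A x v u)"
      by (rule mult_left_mono) simp
  qed
  also have "\<dots> = 2 * (\<Sum>x\<in>?S. \<Sum>u\<in>?N. \<Sum>v\<in>?N. A x u v) + 2 * (\<Sum>x\<in>?S. \<Sum>u\<in>?N. \<Sum>v\<in>?N. A x v u)"
    by (simp add: sum.distrib sum_distrib_left)
  also have "(\<Sum>x\<in>?S. \<Sum>u\<in>?N. \<Sum>v\<in>?N. A x v u) = (\<Sum>x\<in>?S. \<Sum>u\<in>?N. \<Sum>v\<in>?N. A x u v)"
    by (rule sum.cong[OF refl]) (rule sum.swap)
  also have "(\<Sum>x\<in>?S. \<Sum>u\<in>?N. \<Sum>v\<in>?N. A x u v)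
      = 2 * (\<Sum>x\<in>?S. \<Sum>u\<in>?N. \<Sum>v\<in>?N. (1 - coord u x) * coord v x * edge_flip f x u)"
    unfolding A_def distrib_left sum.distrib sum_edge_flip_transposed by simp
  also have "(\<Sum>x\<in>?S. \<Sum>u\<in>?N. \<Sum>v\<in>?N. (1 - coord u x) * coord v x * edge_flip f x u)
      = (\<Sum>x\<in>?S. real r * (\<Sum>u\<in>?N - x. edge_flip f x u))"
    by (rule sum.cong[OF refl]) (rule sum_pairs_edge_flip)
  also have "\<dots> = real r * flip_count n r f"
    by (simp only: flip_count_def sum_distrib_left)
  finally show ?thesis by simp
qed

section \<open>Monotone and \<open>k\<close>-monotone functions\<close>

definition flip_density :: "nat \<Rightarrow> nat \<Rightarrow> (nat set \<Rightarrow> real) \<Rightarrow> real" where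
  "flip_density n r f = flip_count n r f / (real (card (slice n r)) * real (n - r))"

definition slice_mean :: "nat \<Rightarrow> nat \<Rightarrow> (nat set \<Rightarrow> real) \<Rightarrow> real" where
  "slice_mean n r g = (\<Sum>x\<in>slice n r. g x) / real (card (slice n r))"

lemma flip_density_nonneg: "0 \<le> flip_density n r f"
  by (simp add: flip_density_def flip_count_def edge_flip_def sum_nonneg)

lemma sum_slice_insert:
  "(\<Sum>x\<in>slice n r. \<Sum>u\<in>{1..n} - x. F (insert u x)) = real (r + 1) * (\<Sum>y\<in>slice n (r + 1). F y)"
proof -
  have fin: "finite x" if "x \<in> slice n k" for x k
    using that by (auto simp: slice_def intro: finite_subset)
  have "(\<Sum>x\<in>slice n r. \<Sum>u\<in>{1..n} - x. F (insert u x))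
      = (\<Sum>(x, u)\<in>(SIGMA x:slice n r. {1..n} - x). F (insert u x))"
    by (rule sum.Sigma) (auto simp: finite_slice)
  also have "\<dots> = (\<Sum>(y, u)\<in>(SIGMA y:slice n (r + 1). y). F y)"
  proof (rule sum.reindex_bij_witness[where j = "\<lambda>(x, u). (insert u x, u)" and i = "\<lambda>(y, u). (y - {u}, u)"])
    fix a assume "a \<in> (SIGMA x:slice n r. {1..n} - x)"
    then obtain x u where a: "a = (x, u)" "x \<in> slice n r" "u \<in> {1..n} - x" by blast
    then have "finite x" by (simp add: fin)
    then show "(case case a of (x, u) \<Rightarrow> (insert u x, u) of (y, u) \<Rightarrow> (y - {u}, u)) = a"
      "(case a of (x, u) \<Rightarrow> (insert u x, u)) \<in> (SIGMA y:slice n (r + 1). y)"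
      "(case case a of (x, u) \<Rightarrow> (insert u x, u) of (y, u) \<Rightarrow> F y) = (case a of (x, u) \<Rightarrow> F (insert u x))"
      using a by (auto simp: slice_def)
  next
    fix b assume "b \<in> (SIGMA y:slice n (r + 1). y)"
    then obtain y u where b: "b = (y, u)" "y \<in> slice n (r + 1)" "u \<in> y" by blast
    then have "finite y" by (simp add: fin)
    then show "(case case b of (y, u) \<Rightarrow> (y - {u}, u) of (x, u) \<Rightarrow> (insert u x, u)) = b"
      "(case b of (y, u) \<Rightarrow> (y - {u}, u)) \<in> (SIGMA x:slice n r. {1..n} - x)"
      using b by (auto simp: slice_def)
  qed
  also have "\<dots> = (\<Sum>y\<in>slice n (r + 1). \<Sum>u\<in>y. F y)"
    by (rule sum.Sigma[symmetric]) (auto simp: finite_slice fin)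
  also have "\<dots> = real (r + 1) * (\<Sum>y\<in>slice n (r + 1). F y)"
    by (simp add: sum_distrib_left slice_def)
  finally show ?thesis .
qed

lemma card_Diff_slice: "x \<in> slice n r \<Longrightarrow> card ({1..n} - x) = n - r"
  by (auto simp: slice_def card_Diff_subset finite_subset)

lemma sum_slice_Diff_const:
  "(\<Sum>x\<in>slice n r. \<Sum>u\<in>{1..n} - x. g x) = real (n - r) * (\<Sum>x\<in>slice n r. g x)"
  unfolding sum_distrib_left
proof (rule sum.cong[OF refl])
  fix x assume "x \<in> slice n r"
  then show "(\<Sum>u\<in>{1..n} - x. g x) = real (n - r) * g x"
    using card_Diff_slice[of x n r] by simp
qed

lemma card_slice_Suc:
  "real (card (slice n r)) * real (n - r) = real (card (slice n (r + 1))) * real (r + 1)"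
  using sum_slice_insert[where F = "\<lambda>_. 1" and n = n and r = r] sum_slice_Diff_const[where g = "\<lambda>_. 1" and n = n and r = r]
  by (simp add: mult.commute)

text \<open>For a monotone 0/1-valued function a flip along an upward edge is exactly an increment,
  so double counting the edges between two slices turns the flip density into a difference of
  slice means.\<close>

lemma flip_density_monotone:
  assumes "monotone_bool n G" "r < n"
  shows "flip_density n r (\<lambda>x. real (G x))
           = slice_mean n (r + 1) (\<lambda>x. real (G x)) - slice_mean n r (\<lambda>x. real (G x))"
proof -
  let ?G = "\<lambda>x. real (G x)"
  define S0 where "S0 = (\<Sum>x\<in>slice n r. ?G x)"
  define S1 where "S1 = (\<Sum>y\<in>slice n (r + 1). ?G y)"
  define K0 where "K0 = real (card (slice n r))"
  define K1 where "K1 = real (card (slice n (r + 1)))"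
  have edge: "edge_flip ?G x u = ?G (insert u x) - ?G x" if "x \<in> slice n r" "u \<in> {1..n} - x" for x u
  proof -
    have "x \<in> cube n" "insert u x \<in> cube n" using that by (auto simp: slice_def cube_def)
    then have "G x \<in> {0, 1}" "G (insert u x) \<in> {0, 1}" "G x \<le> G (insert u x)"
      using assms(1) by (auto simp: monotone_bool_def)
    then show ?thesis by (auto simp: edge_flip_def)
  qed
  have "flip_count n r ?G = (\<Sum>x\<in>slice n r. \<Sum>u\<in>{1..n} - x. ?G (insert u x) - ?G x)"
    unfolding flip_count_def using edge by (intro sum.cong refl) auto
  also have "\<dots> = real (r + 1) * S1 - real (n - r) * S0"
    by (simp only: sum_subtractf sum_slice_insert[where F = ?G] sum_slice_Diff_const S0_def S1_def)
  finally have count: "flip_count n r ?G = real (r + 1) * S1 - real (n - r) * S0" .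
  have pos: "K0 > 0" "K1 > 0" "real (n - r) > 0"
    using card_slice_pos[of r n] card_slice_pos[of "r + 1" n] assms(2) by (simp_all add: K0_def K1_def)
  have K: "K0 * real (n - r) = K1 * real (r + 1)"
    unfolding K0_def K1_def by (rule card_slice_Suc)
  have "flip_density n r ?G = real (r + 1) * S1 / (K0 * real (n - r)) - real (n - r) * S0 / (K0 * real (n - r))"
    unfolding flip_density_def count K0_def by (rule diff_divide_distrib)
  also have "real (r + 1) * S1 / (K0 * real (n - r)) = S1 / K1"
    unfolding K using pos by simp
  also have "real (n - r) * S0 / (K0 * real (n - r)) = S0 / K0"
    using pos by simp
  finally show ?thesis
    by (simp add: slice_mean_def S0_def S1_def K0_def K1_def)
qed

lemma slice_mean_monotone_bounds:
  assumes "monotone_bool n G"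
  shows "0 \<le> slice_mean n r (\<lambda>x. real (G x))" "slice_mean n r (\<lambda>x. real (G x)) \<le> 1"
proof -
  have "real (G x) \<le> 1" if "x \<in> slice n r" for x
  proof -
    have "x \<in> cube n" using that by (auto simp: slice_def cube_def)
    then show ?thesis using assms by (auto simp: monotone_bool_def)
  qed
  then have "(\<Sum>x\<in>slice n r. real (G x)) \<le> real (card (slice n r))"
    using sum_mono[of "slice n r" "\<lambda>x. real (G x)" "\<lambda>_. 1"] by simp
  then show "slice_mean n r (\<lambda>x. real (G x)) \<le> 1"
    by (cases "card (slice n r) = 0") (simp_all add: slice_mean_def divide_le_eq_1)
  show "0 \<le> slice_mean n r (\<lambda>x. real (G x))"
    by (simp add: slice_mean_def sum_nonneg)
qed

lemma sum_flip_density_monotone: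
  assumes "monotone_bool n G"
  shows "(\<Sum>r<n. flip_density n r (\<lambda>x. real (G x))) \<le> 1"
proof -
  have "(\<Sum>r<n. flip_density n r (\<lambda>x. real (G x)))
      = (\<Sum>r<n. slice_mean n (Suc r) (\<lambda>x. real (G x)) - slice_mean n r (\<lambda>x. real (G x)))"
    using flip_density_monotone[OF assms] by simp
  also have "\<dots> = slice_mean n n (\<lambda>x. real (G x)) - slice_mean n 0 (\<lambda>x. real (G x))"
    by (rule sum_lessThan_telescope)
  also have "\<dots> \<le> 1"
    using slice_mean_monotone_bounds[OF assms, of n] slice_mean_monotone_bounds[OF assms, of 0] by linarith
  finally show ?thesis .
qed

lemma of_bool_neq_le_sum:
  assumes "f x \<noteq> f y \<Longrightarrow> \<exists>i\<in>I. G i x \<noteq> G i y" "finite I"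
  shows "of_bool (f x \<noteq> f y) \<le> (\<Sum>i\<in>I. of_bool (G i x \<noteq> G i y) :: real)"
proof (cases "f x = f y")
  case False
  then obtain i where "i \<in> I" "G i x \<noteq> G i y" using assms(1) by blast
  then have "of_bool (G i x \<noteq> G i y) \<le> (\<Sum>i\<in>I. of_bool (G i x \<noteq> G i y) :: real)"
    using assms(2) by (intro member_le_sum) auto
  then show ?thesis using False \<open>G i x \<noteq> G i y\<close> by simp
qed (simp add: sum_nonneg)

lemma flip_density_le_sum:
  assumes "\<And>x u. x \<in> slice n r \<Longrightarrow> u \<in> {1..n} - x \<Longrightarrow> f x \<noteq> f (insert u x)
             \<Longrightarrow> \<exists>i\<in>I. G i x \<noteq> G i (insert u x)"
    and "finite I"
  shows "flip_density n r f \<le> (\<Sum>i\<in>I. flip_density n r (G i))"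
proof -
  have "flip_count n r f \<le> (\<Sum>x\<in>slice n r. \<Sum>u\<in>{1..n} - x. \<Sum>i\<in>I. edge_flip (G i) x u)"
    unfolding flip_count_def edge_flip_def using assms
    by (intro sum_mono of_bool_neq_le_sum[where f = f]) auto
  also have "\<dots> = (\<Sum>i\<in>I. flip_count n r (G i))"
    unfolding flip_count_def by (simp add: sum.swap[of _ I])
  finally show ?thesis
    unfolding flip_density_def sum_divide_distrib[symmetric] by (simp add: divide_right_mono)
qed

lemma sum_flip_density_k_monotone:
  assumes "k_monotone_pm n k f"
  shows "(\<Sum>r<n. flip_density n r f) \<le> real k"
proof -
  obtain g where g: "k_monotone_bool n k g" "\<forall>x\<in>cube n. real (g x) = (1 - f x) / 2"
    using assms by (auto simp: k_monotone_pm_def)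
  obtain G where G: "\<forall>i<k. monotone_bool n (G i)" "\<forall>x\<in>cube n. g x = (\<Sum>i<k. G i x) mod 2"
    using g(1) by (auto simp: k_monotone_bool_def)
  have "\<exists>i\<in>{..<k}. real (G i x) \<noteq> real (G i y)" if "x \<in> cube n" "y \<in> cube n" "f x \<noteq> f y" for x y
  proof -
    have "real (g x) = (1 - f x) / 2" "real (g y) = (1 - f y) / 2"
      using g(2) that(1,2) by blast+
    then have "g x \<noteq> g y" using that(3) by auto
    then have "(\<Sum>i<k. G i x) \<noteq> (\<Sum>i<k. G i y)" using G(2) that by force
    then show ?thesis by (meson of_nat_eq_iff sum.cong)
  qed
  then have "flip_density n r f \<le> (\<Sum>i<k. flip_density n r (\<lambda>x. real (G i x)))" for r
    by (intro flip_density_le_sum) (auto simp: slice_def cube_def)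
  then have "(\<Sum>r<n. flip_density n r f) \<le> (\<Sum>i<k. \<Sum>r<n. flip_density n r (\<lambda>x. real (G i x)))"
    by (simp add: sum_mono sum.swap[of _ "{..<n}"])
  also have "\<dots> \<le> (\<Sum>i<k. 1)"
    using sum_flip_density_monotone G(1) by (intro sum_mono) auto
  finally show ?thesis by simp
qed

section \<open>Concentration on a middle slice\<close>

lemma slice_size_le:
  assumes "r \<le> n"
  shows "2 * real r * real (n - r) \<le> real n * (real n + 1 - real (min r (n - r)))"
proof (cases "r \<le> n - r")
  case True
  have "2 * real r * real (n - r) \<le> real n * real (n - r)"
    using True assms by (intro mult_right_mono) auto
  also have "\<dots> \<le> real n * (real n + 1 - real r)"
    using assms by (intro mult_left_mono) auto
  finally show ?thesis using True by simp
next
  case False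
  have "2 * real r * real (n - r) = 2 * real (n - r) * real r" by simp
  also have "\<dots> \<le> real n * real r"
    using False assms by (intro mult_right_mono) auto
  also have "\<dots> \<le> real n * (real n + 1 - real (n - r))"
    using assms by (intro mult_left_mono) auto
  finally show ?thesis using False by simp
qed

lemma weight_gt_le_flip_density:
  assumes pm: "\<forall>x\<in>cube n. f x \<in> {-1, 1}" and "r < n"
  shows "weight_gt n r f d \<le> 2 * real n * flip_density n r f / (real d + 1)"
proof -
  define K where "K = real (card (slice n r))"
  define \<Lambda> where "\<Lambda> = 2 * (real d + 1) * (real n + 1 - real (min r (n - r)))"
  define p where "p = flip_density n r f"
  have K: "K > 0" using card_slice_pos[of r n] assms(2) by (simp add: K_def)
  have \<Lambda>: "\<Lambda> > 0" by (simp add: \<Lambda>_def)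
  have "p \<ge> 0" by (simp add: p_def flip_density_nonneg)
  have count: "flip_count n r f = p * K * real (n - r)"
    using K assms(2) by (simp add: p_def flip_density_def K_def)
  have "weight_gt n r f d \<le> (\<Sum>x\<in>slice n r. swap_laplacian {1..n} f x * f x) / (K * \<Lambda>)"
    using weight_gt_le_swap_energy[of r n f d] assms(2) by (simp add: K_def \<Lambda>_def)
  also have "\<dots> \<le> 8 * real r * (p * K * real (n - r)) / (K * \<Lambda>)"
    using swap_energy_le_flip_count[OF pm, of r] K \<Lambda> by (intro divide_right_mono) (simp_all add: count)
  also have "\<dots> = 4 * (2 * real r * real (n - r)) * p / \<Lambda>"
    using K by simp
  also have "\<dots> \<le> 4 * (real n * (real n + 1 - real (min r (n - r)))) * p / \<Lambda>"
    using slice_size_le[of r n] assms(2) \<open>p \<ge> 0\<close> \<Lambda>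
    by (intro divide_right_mono mult_right_mono mult_left_mono) auto
  also have "\<dots> = 2 * real n * p / (real d + 1)"
    using \<Lambda> by (simp add: \<Lambda>_def field_simps)
  finally show ?thesis by (simp add: p_def)
qed

lemma exists_le_average:
  fixes g :: "'a \<Rightarrow> real"
  assumes "finite A" "A \<noteq> {}" "(\<Sum>x\<in>A. g x) \<le> c"
  obtains x where "x \<in> A" "real (card A) * g x \<le> c"
proof -
  have "Min (g ` A) \<in> g ` A" using assms(1,2) by (intro Min_in) auto
  then obtain x where x: "x \<in> A" "g x = Min (g ` A)" by auto
  then have "(\<Sum>y\<in>A. g x) \<le> (\<Sum>y\<in>A. g y)"
    using assms(1) by (intro sum_mono) simp
  then show ?thesis using that x(1) assms(3) by simp
qed

lemma middle_window:
  assumes "1 < t" "t \<le> n" "r \<in> {(n - t + 1) div 2..<(n - t + 1) div 2 + t}"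
  shows "r < n" "real n / 2 - real t / 2 \<le> real r" "real r \<le> real n / 2 + real t / 2"
proof -
  define a where "a = (n - t + 1) div 2"
  have a: "n - t \<le> 2 * a" "2 * a \<le> n - t + 1" by (simp_all add: a_def)
  have r: "a \<le> r" "r < a + t" using assms(3) by (simp_all add: a_def)
  show "r < n"
  proof (cases "t = n")
    case True
    then have "a = 0" using a(2) by simp
    then show ?thesis using r True by simp
  next
    case False
    then show ?thesis using a r assms(2) by linarith
  qed
  have "real n - real t \<le> 2 * real a" "2 * real a \<le> real n - real t + 1"
    using a assms(2) by (simp_all add: of_nat_diff flip: of_nat_mult)
  then show "real n / 2 - real t / 2 \<le> real r" "real r \<le> real n / 2 + real t / 2"
    using r by linarith+
qed

lemma exists_middle_slice_small_flip_density:
  assumes "k_monotone_pm n k f" "1 < t" "t \<le> n"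
  obtains r where "r < n" "real n / 2 - real t / 2 \<le> real r" "real r \<le> real n / 2 + real t / 2"
    "real t * flip_density n r f \<le> real k"
proof -
  define W where "W = {(n - t + 1) div 2..<(n - t + 1) div 2 + t}"
  have "W \<subseteq> {..<n}" using middle_window(1)[OF assms(2,3)] by (auto simp: W_def)
  then have "(\<Sum>r\<in>W. flip_density n r f) \<le> real k"
    using sum_flip_density_k_monotone[OF assms(1)] flip_density_nonneg
    by (meson finite_lessThan sum_mono2 order_trans)
  moreover have "finite W" "W \<noteq> {}" "card W = t" using assms(2) by (auto simp: W_def)
  ultimately obtain r where "r \<in> W" "real t * flip_density n r f \<le> real k"
    by (metis exists_le_average)
  then show ?thesis
    using that middle_window[OF assms(2,3)] by (auto simp: W_def)
qed

theorem lemma1: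
  fixes n k t d :: nat and f :: "nat set \<Rightarrow> real" and \<epsilon> :: real
  assumes "k_monotone_pm n k f"
    and "1 < t" and "t \<le> n"
    and "1 \<le> d" and "\<epsilon> > 0"
    and "real d * \<epsilon> \<ge> 2 * real k * real n / real t"
  shows "concentrated n f t d \<epsilon>"
proof -
  have pm: "\<forall>x\<in>cube n. f x \<in> {-1, 1}" using assms(1) by (simp add: k_monotone_pm_def)
  obtain r where r: "r < n" "real n / 2 - real t / 2 \<le> real r" "real r \<le> real n / 2 + real t / 2"
    and small: "real t * flip_density n r f \<le> real k"
    using exists_middle_slice_small_flip_density[OF assms(1-3)] .
  have "real t * (2 * real n * flip_density n r f) \<le> 2 * real n * real k"
    using small by (simp add: mult_left_mono mult.left_commute)
  also have "\<dots> \<le> real t * (real d * \<epsilon>)"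
    using assms(2,6) by (simp add: field_simps)
  finally have density: "2 * real n * flip_density n r f \<le> real d * \<epsilon>"
    using assms(2) by simp
  have "weight_gt n r f d \<le> 2 * real n * flip_density n r f / (real d + 1)"
    by (rule weight_gt_le_flip_density[OF pm r(1)])
  also have "\<dots> \<le> real d * \<epsilon> / (real d + 1)"
    using density by (intro divide_right_mono) simp_all
  also have "\<dots> < \<epsilon>" using assms(5) by (simp add: field_simps)
  finally show ?thesis
    unfolding concentrated_def using r by (intro exI[of _ "int r"]) auto
qed

end
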